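(* Let $X$ be a stacked simplicial complex of dimension $d$ with a fixed stacking order, and let $f_1,\dots,f_p$ with $p\ge 2$ be a path in $X$. Let $f_i$ be the facet of this path which comes last in the stacking order, and let $v$ be its free vertex. Then either $f_i=f_1$ and $\{v\}=f_1\setminus f_2$, or $f_i=f_p$ and $\{v\}=f_p\setminus f_{p-1}$.
   Context: A simplicial complex $X$ on a finite vertex set $V$ is a family of subsets (faces) of $V$ closed under taking subsets, every element of $V$ lying in some face; facets are inclusion-maximal faces. $X$ is pure of dimension $d$ if every facet has $d+1$ elements; a codimension one face is a face with $d$ elements. $X$ is stacked if it is pure of some dimension $d$ and its facets can be ordered $F_0,F_1,\dots,F_k$ (a stacking order) such that for each $p\ge 1$, $F_p$ contains exactly one vertex $v_p$ not in $F_0\cup\dots\cup F_{p-1}$ (called the free vertex of $F_p$), and $F_p\setminus\{v_p\}\subseteq F_j$ for some $j<p$. A walk is a sequence of facets $f_1,\dots,f_p$ ($p\ge 1$) such that each $f_i\cap f_{i+1}$ has exactly $d$ elements; a path is a walk in which the faces $f_i\cap f_{i+1}$, $1\le i<p$, are pairwise distinct; it is a path from $f_1$ to $f_p$. *)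

theory Defs
  imports Main
begin

definition simplicial_complex :: "'a set \<Rightarrow> 'a set set \<Rightarrow> bool" where
  "simplicial_complex V X \<longleftrightarrow> finite V \<and> (\<forall>F\<in>X. F \<subseteq> V) \<and>
     (\<forall>F\<in>X. \<forall>G. G \<subseteq> F \<longrightarrow> G \<in> X) \<and> (\<forall>v\<in>V. \<exists>F\<in>X. v \<in> F)"

definition facets :: "'a set set \<Rightarrow> 'a set set" where
  "facets X = {F \<in> X. \<forall>G\<in>X. F \<subseteq> G \<longrightarrow> G = F}"

definition pure :: "'a set set \<Rightarrow> nat \<Rightarrow> bool" where
  "pure X d \<longleftrightarrow> (\<forall>F\<in>facets X. card F = d + 1)"

definition new_vertices :: "'a set list \<Rightarrow> nat \<Rightarrow> 'a set" where
  "new_vertices Fs p = Fs ! p - \<Union>(set (take p Fs))"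

definition free_vertex :: "'a set list \<Rightarrow> nat \<Rightarrow> 'a" where
  "free_vertex Fs p = (THE v. v \<in> new_vertices Fs p)"

definition stacking_order :: "'a set set \<Rightarrow> 'a set list \<Rightarrow> bool" where
  "stacking_order X Fs \<longleftrightarrow> distinct Fs \<and> set Fs = facets X \<and>
     (\<forall>p. 1 \<le> p \<and> p < length Fs \<longrightarrow>
        card (new_vertices Fs p) = 1 \<and>
        (\<exists>j<p. Fs ! p - {free_vertex Fs p} \<subseteq> Fs ! j))"

definition stacked :: "'a set set \<Rightarrow> nat \<Rightarrow> bool" where
  "stacked X d \<longleftrightarrow> pure X d \<and> (\<exists>Fs. stacking_order X Fs)"

definition walk :: "'a set set \<Rightarrow> nat \<Rightarrow> 'a set list \<Rightarrow> bool" where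
  "walk X d fs \<longleftrightarrow> fs \<noteq> [] \<and> set fs \<subseteq> facets X \<and>
     (\<forall>i. Suc i < length fs \<longrightarrow> card (fs ! i \<inter> fs ! Suc i) = d)"

definition path :: "'a set set \<Rightarrow> nat \<Rightarrow> 'a set list \<Rightarrow> bool" where
  "path X d fs \<longleftrightarrow> walk X d fs \<and>
     inj_on (\<lambda>i. fs ! i \<inter> fs ! Suc i) {i. Suc i < length fs}"

end

theory Submission
  imports Defs
begin

text \<open>Let \<open>f\<close> be the facet of the path latest in the stacking order and \<open>v\<close> its free vertex.
  Every other facet of the path occurs earlier in the stacking order, so it misses \<open>v\<close>;
  hence each neighbour \<open>g\<close> of \<open>f\<close> on the path meets it in a ridge inside \<open>f - {v}\<close>, and by
  counting \<open>f \<inter> g = f - {v}\<close>, i.e. \<open>f - g = {v}\<close>. If \<open>f\<close> sat in the interior of the path,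
  both of its ridges on the path would be \<open>f - {v}\<close>, contradicting that a path never
  crosses the same ridge twice.\<close>

lemma Diff_eq_singleton_if_card_Int:
  assumes "finite f" "card f = Suc d" "card (f \<inter> g) = d" "v \<in> f" "v \<notin> g"
  shows "f - g = {v}"
proof -
  have "f \<inter> g \<subseteq> f - {v}" using assms(5) by blast
  moreover have "card (f - {v}) = d" using assms(2,4) by simp
  ultimately have "f \<inter> g = f - {v}"
    using assms(1,3) by (metis card_subset_eq finite_Diff)
  then show ?thesis using assms(4) by blast
qed

lemma walk_adjacent_distinct:
  assumes "pure X d" "walk X d fs" "Suc i < length fs"
  shows "fs ! i \<noteq> fs ! Suc i"
proof
  assume eq: "fs ! i = fs ! Suc i"
  have "fs ! i \<in> facets X" using assms(2,3) unfolding walk_def by auto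
  then have "card (fs ! i) = d + 1" using assms(1) unfolding pure_def by blast
  moreover have "card (fs ! i \<inter> fs ! Suc i) = d" using assms(2,3) unfolding walk_def by blast
  ultimately show False using eq by simp
qed

lemma path_ridges_distinct:
  assumes "path X d fs" "Suc (Suc i) < length fs"
  shows "fs ! i \<inter> fs ! Suc i \<noteq> fs ! Suc i \<inter> fs ! Suc (Suc i)"
  using assms unfolding path_def inj_on_def by fastforce

lemma stacking_order_free_vertex:
  assumes "stacking_order X Fs" "0 < q" "q < length Fs"
  shows "new_vertices Fs q = {free_vertex Fs q}"
proof -
  have "card (new_vertices Fs q) = 1" using assms unfolding stacking_order_def by simp
  then obtain v where "new_vertices Fs q = {v}" using card_1_singletonE by blast
  then show ?thesis unfolding free_vertex_def by simp
qed

lemma free_vertex_notin_earlier: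
  assumes "stacking_order X Fs" "0 < q" "q < length Fs" "g \<in> set (take q Fs)"
  shows "free_vertex Fs q \<notin> g"
  using stacking_order_free_vertex[OF assms(1-3)] assms(4) unfolding new_vertices_def by blast

lemma free_vertex_in_facet:
  assumes "stacking_order X Fs" "0 < q" "q < length Fs"
  shows "free_vertex Fs q \<in> Fs ! q"
  using stacking_order_free_vertex[OF assms] unfolding new_vertices_def by blast

lemma facet_Diff_earlier_ridge:
  assumes "stacking_order X Fs" "pure X d" "0 < q" "q < length Fs"
    and "g \<in> set (take q Fs)" "card (Fs ! q \<inter> g) = d"
  shows "Fs ! q - g = {free_vertex Fs q}"
proof -
  have "Fs ! q \<in> facets X" using assms(1,4) unfolding stacking_order_def by auto
  then have card: "card (Fs ! q) = Suc d" using assms(2) unfolding pure_def by simp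
  then have "finite (Fs ! q)" using card.infinite by fastforce
  from Diff_eq_singleton_if_card_Int[OF this card assms(6)] show ?thesis
    using free_vertex_in_facet[OF assms(1,3,4)] free_vertex_notin_earlier[OF assms(1,3-5)] .
qed

lemma in_set_take_if_before:
  assumes "g \<in> set Fs" "g \<noteq> Fs ! q" "\<forall>j<length Fs. Fs ! j = g \<longrightarrow> j \<le> q"
  shows "g \<in> set (take q Fs)"
proof -
  obtain j where j: "j < length Fs" "Fs ! j = g" using assms(1) by (auto simp: in_set_conv_nth)
  with assms(2,3) have "j < q" using le_neq_implies_less by blast
  with j show ?thesis by (auto simp: in_set_conv_nth)
qed

lemma walk_latest_facet_Diff_neighbour:
  assumes "stacking_order X Fs" "pure X d" "walk X d fs" "0 < q" "q < length Fs"
    and latest: "\<forall>j<length Fs. Fs ! j \<in> set fs \<longrightarrow> j \<le> q"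
    and "i < length fs" "j < length fs" "Suc i = j \<or> Suc j = i" "fs ! i = Fs ! q"
  shows "Fs ! q - fs ! j = {free_vertex Fs q}"
proof -
  have ridge: "fs ! j \<noteq> Fs ! q" "card (Fs ! q \<inter> fs ! j) = d"
    using assms(7-10) walk_adjacent_distinct[OF assms(2,3), of i]
      walk_adjacent_distinct[OF assms(2,3), of j] assms(3)
    unfolding walk_def by (auto simp: Int_commute)
  have "fs ! j \<in> set fs" using assms(8) by simp
  moreover from this have "fs ! j \<in> set Fs"
    using assms(1,3) unfolding walk_def stacking_order_def by auto
  ultimately have "fs ! j \<in> set (take q Fs)"
    using in_set_take_if_before ridge(1) latest by metis
  from facet_Diff_earlier_ridge[OF assms(1,2,4,5) this ridge(2)] show ?thesis .
qed

lemma walk_latest_facet_index_pos: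
  assumes "stacking_order X Fs" "pure X d" "walk X d fs" "length fs \<ge> 2"
    and "\<forall>j<length Fs. Fs ! j \<in> set fs \<longrightarrow> j \<le> q"
  shows "0 < q"
proof (rule ccontr)
  assume "\<not> 0 < q"
  have "fs ! 0 \<in> set Fs" "fs ! 1 \<in> set Fs" "fs ! 0 \<in> set fs" "fs ! 1 \<in> set fs"
    using assms(1,3,4) unfolding walk_def stacking_order_def by (auto intro!: nth_mem)
  then have "fs ! 0 = Fs ! 0" "fs ! 1 = Fs ! 0"
    using assms(5) \<open>\<not> 0 < q\<close> by (metis in_set_conv_nth le_zero_eq not_gr0)+
  then show False using walk_adjacent_distinct[OF assms(2,3), of 0] assms(4) by simp
qed

lemma path_latest_facet_at_end:
  assumes "stacking_order X Fs" "pure X d" "path X d fs" "0 < q" "q < length Fs"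
    and "\<forall>j<length Fs. Fs ! j \<in> set fs \<longrightarrow> j \<le> q"
    and "i < length fs" "fs ! i = Fs ! q"
  shows "i = 0 \<or> i = length fs - 1"
proof (rule ccontr)
  assume "\<not> (i = 0 \<or> i = length fs - 1)"
  then obtain k where k: "i = Suc k" "Suc (Suc k) < length fs" using assms(7) by (cases i) auto
  have walk: "walk X d fs" using assms(3) unfolding path_def by blast
  note neighbour = walk_latest_facet_Diff_neighbour[OF assms(1,2) walk assms(4-7) _ _ assms(8)]
  have "Fs ! q - fs ! k = Fs ! q - fs ! Suc (Suc k)"
    using neighbour[of k] neighbour[of "Suc (Suc k)"] k by simp
  then have "fs ! k \<inter> fs ! Suc k = fs ! Suc k \<inter> fs ! Suc (Suc k)"
    using assms(8) k(1) by blast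
  then show False using path_ridges_distinct[OF assms(3) k(2)] by blast
qed

theorem lemma2p5:
  fixes V :: "'a set" and X :: "'a set set" and d :: nat
    and Fs fs :: "'a set list" and q :: nat
  assumes "simplicial_complex V X"
    and "stacked X d"
    and "stacking_order X Fs"
    and "path X d fs"
    and "length fs \<ge> 2"
    and "q < length Fs" and "Fs ! q \<in> set fs"
    and "\<forall>j<length Fs. Fs ! j \<in> set fs \<longrightarrow> j \<le> q"
  shows "(Fs ! q = fs ! 0 \<and> {free_vertex Fs q} = fs ! 0 - fs ! 1) \<or>
         (Fs ! q = fs ! (length fs - 1) \<and>
          {free_vertex Fs q} = fs ! (length fs - 1) - fs ! (length fs - 2))"
proof -
  have pure: "pure X d" using assms(2) unfolding stacked_def by blast
  have walk: "walk X d fs" using assms(4) unfolding path_def by blast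
  have "0 < q" using walk_latest_facet_index_pos[OF assms(3) pure walk assms(5,8)] .
  note neighbour = walk_latest_facet_Diff_neighbour[OF assms(3) pure walk \<open>0 < q\<close> assms(6,8)]
  obtain i where i: "i < length fs" "fs ! i = Fs ! q"
    using assms(7) by (auto simp: in_set_conv_nth)
  from path_latest_facet_at_end[OF assms(3) pure assms(4) \<open>0 < q\<close> assms(6,8) i]
  show ?thesis
  proof
    assume "i = 0"
    then show ?thesis using neighbour[OF i(1), of 1] i(2) assms(5) by simp
  next
    assume "i = length fs - 1"
    then have "Suc (length fs - 2) = i" using assms(5) by simp
    then show ?thesis
      using neighbour[OF i(1), of "length fs - 2"] i \<open>i = length fs - 1\<close> by auto
  qed
qed

end
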